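(* Let $\kappa^2>0$ and consider \[ \mathcal{G}(\mathbf{u})=\frac{1}{2\pi}\int_{-\pi}^{\pi}|\partial_t\mathbf{u}|^2\,dt+\frac{\kappa^2}{2\pi}\int_{-\pi}^{\pi}|\mathbf{u}\times\mathbf{n}|^2\,dt \] on $\mathcal{K}=\{\mathbf{u}\in H^1_\sharp([-\pi,\pi],\mathbb{R}^3):\ \frac{1}{2\pi}\int_{-\pi}^{\pi}|\mathbf{u}|^2\,dt=1\}$. Every critical point $\mathbf{u}$ of $\mathcal{G}$ on $\mathcal{K}$ with $\mathcal{G}(\mathbf{u})<\kappa^2$ is in-plane, i.e. $\mathbf{u}(t)\cdot\mathbf{e}_3=0$ for all $t$. Moreover, every minimizer $\mathbf{u}$ of $\mathcal{G}$ on $\mathcal{K}$ satisfies $0<\mathcal{G}(\mathbf{u})\le\min\{\kappa^2/2,1\}$, and in particular every minimizer of $\mathcal{G}$ on $\mathcal{K}$ is in-plane.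
   Context: $H^1_\sharp([-\pi,\pi],\mathbb{R}^3)$ denotes $2\pi$-periodic $H^1$ functions $[-\pi,\pi]\to\mathbb{R}^3$. $\mathbf{n}(t)=(\cos t,\sin t,0)$, $\mathbf{e}_3=(0,0,1)$. A critical point of $\mathcal{G}$ on $\mathcal{K}$ is $\mathbf{u}\in\mathcal{K}$ that weakly solves $-\partial_{tt}\mathbf{u}+\kappa^2(\mathbf{u}-(\mathbf{n}\otimes\mathbf{n})\mathbf{u})=\lambda\mathbf{u}$ in $(H^1_\sharp([-\pi,\pi],\mathbb{R}^3))'$ for some $\lambda\in\mathbb{R}$. *)

theory Defs
  imports "HOL-Analysis.Analysis" "HOL-Analysis.Cross3"
begin

text \<open>An element of the periodic Sobolev space on [-pi,pi]
  is represented by its continuous (absolutely continuous) representative \<open>u\<close>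
  together with a weak derivative \<open>v\<close> in L^2.\<close>

definition nvec :: "real \<Rightarrow> real^3" where
  "nvec t = vector [cos t, sin t, 0]"

definition e3 :: "real^3" where
  "e3 = vector [0, 0, 1]"

definition weak_deriv :: "(real \<Rightarrow> real^3) \<Rightarrow> (real \<Rightarrow> real^3) \<Rightarrow> bool" where
  "weak_deriv u v \<longleftrightarrow>
     v absolutely_integrable_on {-pi..pi} \<and>
     (\<lambda>t. (norm (v t))\<^sup>2) integrable_on {-pi..pi} \<and>
     (\<forall>t\<in>{-pi..pi}. u t = u (-pi) + integral {-pi..t} v)"

definition H1per :: "(real \<Rightarrow> real^3) \<Rightarrow> bool" where
  "H1per u \<longleftrightarrow> (\<exists>v. weak_deriv u v) \<and> u pi = u (-pi)"

definition wderiv :: "(real \<Rightarrow> real^3) \<Rightarrow> real \<Rightarrow> real^3" where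
  "wderiv u = (SOME v. weak_deriv u v)"

definition Gfun :: "real \<Rightarrow> (real \<Rightarrow> real^3) \<Rightarrow> real" where
  "Gfun kappa u =
     1 / (2 * pi) * integral {-pi..pi} (\<lambda>t. (norm (wderiv u t))\<^sup>2)
     + kappa\<^sup>2 / (2 * pi) * integral {-pi..pi} (\<lambda>t. (norm (cross3 (u t) (nvec t)))\<^sup>2)"

definition Kset :: "(real \<Rightarrow> real^3) set" where
  "Kset = {u. H1per u \<and> 1 / (2 * pi) * integral {-pi..pi} (\<lambda>t. (norm (u t))\<^sup>2) = 1}"

text \<open>Weak form of  -u'' + kappa^2 (u - (n n^T) u) = lambda u  tested against all
  phi in H^1_sharp (the pairing of -u'' with phi is int u' . phi').\<close>
definition critical_point :: "real \<Rightarrow> (real \<Rightarrow> real^3) \<Rightarrow> bool" where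
  "critical_point kappa u \<longleftrightarrow> u \<in> Kset \<and>
     (\<exists>lam::real. \<forall>phi. H1per phi \<longrightarrow>
        integral {-pi..pi} (\<lambda>t. wderiv u t \<bullet> wderiv phi t
            + kappa\<^sup>2 * ((u t - (nvec t \<bullet> u t) *\<^sub>R nvec t) \<bullet> phi t))
        = lam * integral {-pi..pi} (\<lambda>t. u t \<bullet> phi t))"

definition minimizer :: "real \<Rightarrow> (real \<Rightarrow> real^3) \<Rightarrow> bool" where
  "minimizer kappa u \<longleftrightarrow> u \<in> Kset \<and> (\<forall>w\<in>Kset. Gfun kappa u \<le> Gfun kappa w)"

definition in_plane :: "(real \<Rightarrow> real^3) \<Rightarrow> bool" where
  "in_plane u \<longleftrightarrow> (\<forall>t\<in>{-pi..pi}. u t \<bullet> e3 = 0)"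

end

theory Submission
  imports Defs "HOL-Analysis.Radon_Nikodym"
begin

text \<open>Testing the Euler--Lagrange equation with \<open>u\<close> itself identifies the Lagrange
  multiplier with \<open>\<lambda> = G(u)\<close>; testing it with the vertical component \<open>u\<^sub>3 e\<^sub>3\<close> gives
  \<open>\<integral>|u\<^sub>3'|\<^sup>2 + \<kappa>\<^sup>2 \<integral>u\<^sub>3\<^sup>2 = \<lambda> \<integral>u\<^sub>3\<^sup>2\<close>, which forces \<open>u\<^sub>3 = 0\<close> as soon as \<open>\<lambda> < \<kappa>\<^sup>2\<close>.

  For a minimizer, the competitors \<open>n\<close> and \<open>e\<^sub>1\<close> give \<open>G(u) \<le> 1\<close> and \<open>G(u) \<le> \<kappa>\<^sup>2/2\<close>, and
  \<open>G(u) = 0\<close> is impossible on \<open>K\<close> because it forces \<open>u\<close> to be constant and parallel to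
  every \<open>n(t)\<close>. The energy splits as \<open>G(u) = G(u\<^sub>h) + V\<close> into the horizontal part
  \<open>u\<^sub>h = u - u\<^sub>3 e\<^sub>3\<close> and a vertical part \<open>V \<ge> \<kappa>\<^sup>2 m\<close>, where \<open>m\<close> is the mean of \<open>u\<^sub>3\<^sup>2\<close>.
  If \<open>m > 0\<close>, the renormalised \<open>u\<^sub>h / \<surd>(1 - m)\<close> lies in \<open>K\<close> with energy
  \<open>G(u\<^sub>h)/(1 - m)\<close>, and comparing it with \<open>G(u)\<close> yields \<open>G(u) \<ge> \<kappa>\<^sup>2\<close>, contradicting
  \<open>G(u) \<le> \<kappa>\<^sup>2/2\<close>.\<close>

subsection \<open>Functions with vanishing indefinite integrals\<close>

text \<open>The positive and negative parts of \<open>g\<close> are densities of measures that agree on every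
  ray \<open>{x<..}\<close>, hence coincide.\<close>

lemma AE_eq_0_if_integral_greaterThan_eq_0:
  fixes g :: "real \<Rightarrow> real"
  assumes g: "integrable lborel g"
    and tails: "\<And>x. integral\<^sup>L lborel (\<lambda>y. g y * indicator {x<..} y) = 0"
  shows "AE y in lborel. g y = 0"
proof -
  have gm: "g \<in> borel_measurable lborel" using g by (rule borel_measurable_integrable)
  have pos_neg: "(\<integral>\<^sup>+y. ennreal (g y) * indicator {x<..} y \<partial>lborel) =
             (\<integral>\<^sup>+y. ennreal (- g y) * indicator {x<..} y \<partial>lborel)
          \<and> (\<integral>\<^sup>+y. ennreal (g y) * indicator {x<..} y \<partial>lborel) < \<infinity>" for x
  proof -
    have "integrable lborel (\<lambda>y. g y * indicator {x<..} y)"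
      by (rule integrable_real_mult_indicator) (use g in auto)
    then obtain r q where rq: "0 \<le> r" "0 \<le> q"
      "(\<integral>\<^sup>+y. ennreal (g y * indicator {x<..} y) \<partial>lborel) = ennreal r"
      "(\<integral>\<^sup>+y. ennreal (- (g y * indicator {x<..} y)) \<partial>lborel) = ennreal q"
      "integral\<^sup>L lborel (\<lambda>y. g y * indicator {x<..} y) = r - q"
      by (rule integrableE)
    have "(\<lambda>y. ennreal (g y) * indicator {x<..} y) = (\<lambda>y. ennreal (g y * indicator {x<..} y))"
      "(\<lambda>y. ennreal (- g y) * indicator {x<..} y) = (\<lambda>y. ennreal (- (g y * indicator {x<..} y)))"
      by (auto simp: indicator_def)
    then show ?thesis using rq tails[of x] by simp
  qed
  have m_pos: "(\<lambda>y. ennreal (g y)) \<in> borel_measurable lborel"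
    and m_neg: "(\<lambda>y. ennreal (- g y)) \<in> borel_measurable lborel" using gm by simp_all
  have "density lborel (\<lambda>y. ennreal (g y)) = density lborel (\<lambda>y. ennreal (- g y))"
  proof (rule measure_eqI_lessThan)
    fix x
    show "emeasure (density lborel (\<lambda>y. ennreal (g y))) {x<..} < \<infinity>"
      unfolding emeasure_density[OF m_pos, of "{x<..}", simplified] using pos_neg[of x] by (rule conjunct2)
    show "emeasure (density lborel (\<lambda>y. ennreal (g y))) {x<..}
        = emeasure (density lborel (\<lambda>y. ennreal (- g y))) {x<..}"
      unfolding emeasure_density[OF m_pos, of "{x<..}", simplified]
        emeasure_density[OF m_neg, of "{x<..}", simplified]
      using pos_neg[of x] by (rule conjunct1)
  qed simp_all
  then have "AE y in lborel. ennreal (g y) = ennreal (- g y)"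
    by (rule sigma_finite_measure.density_unique[OF sigma_finite_lborel m_pos m_neg])
  then show ?thesis
    by eventually_elim (metis ennreal_eq_0_iff neg_0_le_iff_le neg_le_0_iff_le nle_le)
qed

lemma integral_Int_greaterThan_eq_0:
  fixes w :: "real \<Rightarrow> 'a::banach"
  assumes w: "w integrable_on {a..b}" and z: "\<forall>t\<in>{a..b}. integral {a..t} w = 0"
  shows "integral ({a..b} \<inter> {x<..}) w = 0"
proof (cases "x < a")
  case True
  then have "{a..b} \<inter> {x<..} = {a..b}" by auto
  then show ?thesis using z by (cases "a \<le> b") auto
next
  case False
  show ?thesis
  proof (cases "x < b")
    case True
    have "integral ({a..b} \<inter> {x<..}) w = integral {x..b} w"
      using True False
      by (intro integral_spike_set) (auto intro: negligible_subset[of "{x}"])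
    also have "\<dots> = integral {a..b} w - integral {a..x} w"
      using Henstock_Kurzweil_Integration.integral_combine[OF _ _ w, of x] True False
      by (auto simp: algebra_simps)
    also have "\<dots> = 0" using z True False by auto
    finally show ?thesis .
  next
    case False
    then have "{a..b} \<inter> {x<..} = {}" by auto
    then show ?thesis by simp
  qed
qed

lemma negligible_if_indefinite_integral_eq_0:
  fixes w :: "real \<Rightarrow> real"
  assumes w: "w absolutely_integrable_on {a..b}"
    and z: "\<forall>t\<in>{a..b}. integral {a..t} w = 0"
  shows "negligible {t\<in>{a..b}. w t \<noteq> 0}"
proof -
  define g where "g = (\<lambda>x. indicator {a..b} x * w x)"
  have gi: "integrable lebesgue g" using w by (simp add: set_integrable_def g_def)
  then have gm[measurable]: "g \<in> borel_measurable lebesgue" by (rule borel_measurable_integrable)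
  obtain g' where g'm: "g' \<in> borel_measurable lborel" and "AE x in lborel. g x = g' x"
    using completion_ex_borel_measurable_real[OF gm] by blast
  from this(2) have ae: "AE x in lebesgue. g x = g' x" by (rule AE_completion)
  note id_borel_measurable_lebesgue[unfolded id_def, measurable]
  have g'm'[measurable]: "g' \<in> borel_measurable lebesgue" using g'm by (rule measurable_completion)
  have g'i: "integrable lborel g'"
    using integrable_cong_AE_imp[OF gi g'm' ae] integrable_completion[OF g'm] by simp
  have "integral\<^sup>L lborel (\<lambda>y. g' y * indicator {x<..} y) = 0" for x
  proof -
    have "integral\<^sup>L lborel (\<lambda>y. g' y * indicator {x<..} y)
        = integral\<^sup>L lebesgue (\<lambda>y. g' y * indicator {x<..} y)"
      by (rule integral_completion[symmetric]) (use g'm in measurable)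
    also have "\<dots> = integral\<^sup>L lebesgue (\<lambda>y. g y * indicator {x<..} y)"
      by (rule integral_cong_AE; (measurable)?) (use ae in auto)
    also have "\<dots> = (LINT y:({a..b} \<inter> {x<..})|lebesgue. w y)"
      unfolding set_lebesgue_integral_def g_def
      by (rule Bochner_Integration.integral_cong) (auto simp: indicator_def)
    also have "\<dots> = integral ({a..b} \<inter> {x<..}) w"
      by (rule set_lebesgue_integral_eq_integral(2), rule set_integrable_subset[OF w]) auto
    also have "\<dots> = 0"
      using integral_Int_greaterThan_eq_0 set_lebesgue_integral_eq_integral(1)[OF w] z by blast
    finally show ?thesis .
  qed
  then have "AE y in lborel. g' y = 0" by (rule AE_eq_0_if_integral_greaterThan_eq_0[OF g'i])
  then have "AE y in lebesgue. g' y = 0" by (rule AE_completion)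
  then have "AE y in lebesgue. g y = 0" using ae by eventually_elim simp
  then obtain N where N: "negligible N" "{y. g y \<noteq> 0} \<subseteq> N"
    unfolding eventually_ae_filter_negligible by blast
  show ?thesis by (rule negligible_subset[OF N(1)]) (use N(2) in \<open>auto simp: g_def\<close>)
qed

lemma negligible_if_integral_nonneg_eq_0:
  fixes f :: "real \<Rightarrow> real"
  assumes f: "f integrable_on {a..b}" and nonneg: "\<forall>x\<in>{a..b}. 0 \<le> f x"
    and z: "integral {a..b} f = 0"
  shows "negligible {x\<in>{a..b}. f x \<noteq> 0}"
proof (rule negligible_if_indefinite_integral_eq_0)
  show "f absolutely_integrable_on {a..b}"
    by (rule nonnegative_absolutely_integrable_1[OF f]) (use nonneg in auto)
  show "\<forall>t\<in>{a..b}. integral {a..t} f = 0"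
  proof
    fix t assume t: "t \<in> {a..b}"
    have ft: "f integrable_on {a..t}" by (rule integrable_on_subinterval[OF f]) (use t in auto)
    have "integral {a..t} f \<le> integral {a..b} f"
      by (rule integral_subset_le) (use t ft f nonneg in auto)
    moreover have "0 \<le> integral {a..t} f"
      by (rule integral_nonneg[OF ft]) (use t nonneg in auto)
    ultimately show "integral {a..t} f = 0" using z by simp
  qed
qed

subsection \<open>Weak derivatives\<close>

lemma weak_deriv_absolutely_integrable: "weak_deriv u v \<Longrightarrow> v absolutely_integrable_on {-pi..pi}"
  unfolding weak_deriv_def by blast

lemma weak_deriv_integrable: "weak_deriv u v \<Longrightarrow> v integrable_on {-pi..pi}"
  by (meson weak_deriv_absolutely_integrable set_lebesgue_integral_eq_integral(1))

lemma weak_deriv_integral_eq: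
  "weak_deriv u v \<Longrightarrow> t \<in> {-pi..pi} \<Longrightarrow> u t = u (-pi) + integral {-pi..t} v"
  unfolding weak_deriv_def by blast

lemma weak_deriv_continuous_on:
  assumes "weak_deriv u v"
  shows "continuous_on {-pi..pi} u"
proof -
  have "continuous_on {-pi..pi} (\<lambda>t. integral {-pi..t} v)"
    by (rule indefinite_integral_continuous_1[OF weak_deriv_integrable[OF assms]])
  then have "continuous_on {-pi..pi} (\<lambda>t. u (-pi) + integral {-pi..t} v)"
    by (rule continuous_on_add[OF continuous_on_const])
  then show ?thesis
    by (rule continuous_on_eq) (metis weak_deriv_integral_eq[OF assms])
qed

lemma weak_deriv_unique:
  assumes v1: "weak_deriv u v1" and v2: "weak_deriv u v2"
  shows "negligible {t\<in>{-pi..pi}. v1 t \<noteq> v2 t}"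
proof -
  have "negligible {t\<in>{-pi..pi}. (v1 t - v2 t) $ i \<noteq> 0}" for i
  proof (rule negligible_if_indefinite_integral_eq_0)
    have "(\<lambda>t. v1 t - v2 t) absolutely_integrable_on {-pi..pi}"
      using v1 v2 by (intro set_integral_diff weak_deriv_absolutely_integrable)
    from absolutely_integrable_component[OF this, of "axis i 1"]
    show "(\<lambda>t. (v1 t - v2 t) $ i) absolutely_integrable_on {-pi..pi}"
      by (simp add: inner_axis)
    show "\<forall>t\<in>{-pi..pi}. integral {-pi..t} (\<lambda>t. (v1 t - v2 t) $ i) = 0"
    proof
      fix t assume t: "t \<in> {-pi..pi}"
      have i1: "v1 integrable_on {-pi..t}"
        by (rule integrable_on_subinterval[OF weak_deriv_integrable[OF v1]]) (use t in auto)
      have i2: "v2 integrable_on {-pi..t}"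
        by (rule integrable_on_subinterval[OF weak_deriv_integrable[OF v2]]) (use t in auto)
      have "integral {-pi..t} (\<lambda>t. (v1 t - v2 t) $ i) = integral {-pi..t} (\<lambda>t. v1 t - v2 t) $ i"
        using i1 i2 by (intro integral_component_eq_cart integrable_diff)
      also have "\<dots> = (integral {-pi..t} v1 - integral {-pi..t} v2) $ i"
        using i1 i2 by (simp add: integral_diff)
      also have "\<dots> = 0"
        using weak_deriv_integral_eq[OF v1 t] weak_deriv_integral_eq[OF v2 t]
        by (metis add_left_cancel diff_self zero_index)
      finally show "integral {-pi..t} (\<lambda>t. (v1 t - v2 t) $ i) = 0" .
    qed
  qed
  then have "negligible (\<Union>i. {t\<in>{-pi..pi}. (v1 t - v2 t) $ i \<noteq> 0})"
    by (intro negligible_Union) auto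
  then show ?thesis by (rule negligible_subset) (auto simp: vec_eq_iff)
qed

lemma weak_deriv_norm_sq_integrable:
  assumes "weak_deriv u v" and L: "bounded_linear L"
  shows "(\<lambda>t. (norm (L (v t)))\<^sup>2) integrable_on {-pi..pi}"
proof -
  obtain K where K: "\<And>x. norm (L x) \<le> norm x * K"
    using bounded_linear.pos_bounded[OF L] by blast
  have "v \<in> borel_measurable (lebesgue_on {-pi..pi})"
    by (rule integrable_imp_measurable[OF weak_deriv_integrable[OF assms(1)]])
  moreover have "continuous_on UNIV (\<lambda>x. (norm (L x))\<^sup>2)"
    by (intro continuous_on_power continuous_on_norm linear_continuous_on L)
  ultimately have m: "(\<lambda>t. (norm (L (v t)))\<^sup>2) \<in> borel_measurable (lebesgue_on {-pi..pi})"
    using measurable_compose[OF _ borel_measurable_continuous_onI] by (simp add: o_def)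
  show ?thesis
  proof (rule measurable_bounded_by_integrable_imp_integrable_real[OF m])
    have "(\<lambda>t. (norm (v t))\<^sup>2) integrable_on {-pi..pi}"
      using assms(1) unfolding weak_deriv_def by blast
    from integrable_on_cmult_left[OF this, of "K\<^sup>2"]
    show "(\<lambda>t. K\<^sup>2 * (norm (v t))\<^sup>2) integrable_on {-pi..pi}" by simp
    fix x
    have "(norm (L (v x)))\<^sup>2 \<le> (norm (v x) * K)\<^sup>2"
      by (rule power_mono[OF K]) simp
    then show "\<bar>(norm (L (v x)))\<^sup>2\<bar> \<le> K\<^sup>2 * (norm (v x))\<^sup>2"
      by (simp add: power_mult_distrib mult.commute)
  qed simp
qed

lemma weak_deriv_bounded_linear:
  assumes v: "weak_deriv u v" and L: "bounded_linear L"
  shows "weak_deriv (\<lambda>t. L (u t)) (\<lambda>t. L (v t))"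
  unfolding weak_deriv_def
proof (intro conjI ballI)
  show "(\<lambda>t. L (v t)) absolutely_integrable_on {-pi..pi}"
    using absolutely_integrable_linear[OF weak_deriv_absolutely_integrable[OF v] L]
    by (simp add: o_def)
  show "(\<lambda>t. (norm (L (v t)))\<^sup>2) integrable_on {-pi..pi}"
    by (rule weak_deriv_norm_sq_integrable[OF v L])
  fix t assume t: "t \<in> {-pi..pi}"
  have "v integrable_on {-pi..t}"
    by (rule integrable_on_subinterval[OF weak_deriv_integrable[OF v]]) (use t in auto)
  then have "integral {-pi..t} (\<lambda>t. L (v t)) = L (integral {-pi..t} v)"
    using integral_linear[OF _ L] by (simp add: o_def)
  then show "L (u t) = L (u (-pi)) + integral {-pi..t} (\<lambda>t. L (v t))"
    using weak_deriv_integral_eq[OF v t] linear_add[OF bounded_linear.linear[OF L]] by metis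
qed

lemma weak_deriv_if_has_vector_derivative:
  assumes cont: "continuous_on {-pi..pi} f'"
    and deriv: "\<And>t. t \<in> {-pi..pi} \<Longrightarrow> (f has_vector_derivative f' t) (at t within {-pi..pi})"
  shows "weak_deriv f f'"
  unfolding weak_deriv_def
proof (intro conjI ballI)
  show "f' absolutely_integrable_on {-pi..pi}"
    by (rule absolutely_integrable_continuous_real[OF cont])
  show "(\<lambda>t. (norm (f' t))\<^sup>2) integrable_on {-pi..pi}"
    by (intro integrable_continuous_interval continuous_intros cont)
  fix t assume t: "t \<in> {-pi..pi}"
  have "(f' has_integral (f t - f (-pi))) {-pi..t}"
  proof (rule fundamental_theorem_of_calculus)
    fix x assume "x \<in> {-pi..t}"
    then show "(f has_vector_derivative f' x) (at x within {-pi..t})"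
      using t by (intro has_vector_derivative_within_subset[OF deriv]) auto
  qed (use t in auto)
  then show "f t = f (-pi) + integral {-pi..t} f'" by (simp add: integral_unique)
qed

lemma H1per_bounded_linear: "H1per u \<Longrightarrow> bounded_linear L \<Longrightarrow> H1per (\<lambda>t. L (u t))"
  unfolding H1per_def using weak_deriv_bounded_linear by metis

lemma weak_deriv_wderiv: "H1per u \<Longrightarrow> weak_deriv u (wderiv u)"
  unfolding H1per_def wderiv_def by (metis someI_ex)

lemma H1per_continuous_on: "H1per u \<Longrightarrow> continuous_on {-pi..pi} u"
  by (rule weak_deriv_continuous_on[OF weak_deriv_wderiv])

lemma integral_wderiv_eq:
  assumes "H1per u" "weak_deriv u v"
  shows "integral {-pi..pi} (\<lambda>t. F (wderiv u t) t) = integral {-pi..pi} (\<lambda>t. F (v t) t)"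
  by (rule integral_spike[OF weak_deriv_unique[OF weak_deriv_wderiv[OF assms(1)] assms(2)]]) auto

lemma weak_deriv_norm_sq_eq_0_imp_constant:
  assumes v: "weak_deriv u v" and z: "integral {-pi..pi} (\<lambda>t. (norm (v t))\<^sup>2) = 0"
    and t: "t \<in> {-pi..pi}"
  shows "u t = u (-pi)"
proof -
  have "(\<lambda>t. (norm (v t))\<^sup>2) integrable_on {-pi..pi}"
    using v unfolding weak_deriv_def by blast
  then have "negligible {t\<in>{-pi..pi}. (norm (v t))\<^sup>2 \<noteq> 0}"
    using z by (intro negligible_if_integral_nonneg_eq_0) auto
  then have "integral {-pi..t} v = integral {-pi..t} (\<lambda>_. 0)"
    by (rule integral_spike) (use t in auto)
  then show ?thesis using weak_deriv_integral_eq[OF v t] by simp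
qed

lemma norm_sq_vec3: "(norm (x::real^3))\<^sup>2 = (x$1)\<^sup>2 + (x$2)\<^sup>2 + (x$3)\<^sup>2"
  unfolding power2_norm_eq_inner inner_vec_def sum_3 by (simp add: power2_eq_square)

lemma inner_vec3: "(x::real^3) \<bullet> y = x$1 * y$1 + x$2 * y$2 + x$3 * y$3"
  by (simp add: inner_vec_def sum_3)

lemma nvec_nth [simp]: "nvec t $ 1 = cos t" "nvec t $ 2 = sin t" "nvec t $ 3 = 0"
  by (simp_all add: nvec_def)

lemma e3_nth [simp]: "e3 $ 1 = 0" "e3 $ 2 = 0" "e3 $ 3 = 1"
  by (simp_all add: e3_def)

definition vertical :: "real^3 \<Rightarrow> real^3" where
  "vertical x = (x$3) *\<^sub>R e3"

definition horizontal :: "real^3 \<Rightarrow> real^3" where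
  "horizontal x = x - vertical x"

lemma vertical_nth [simp]: "vertical x $ 1 = 0" "vertical x $ 2 = 0" "vertical x $ 3 = x$3"
  by (simp_all add: vertical_def)

lemma horizontal_nth [simp]: "horizontal x $ 1 = x$1" "horizontal x $ 2 = x$2" "horizontal x $ 3 = 0"
  by (simp_all add: horizontal_def)

lemma bounded_linear_vertical: "bounded_linear vertical"
  unfolding vertical_def by (intro bounded_linear_scaleR_const bounded_linear_vec_nth)

lemma bounded_linear_horizontal: "bounded_linear horizontal"
  unfolding horizontal_def
  by (intro bounded_linear_sub bounded_linear_ident bounded_linear_vertical)

lemma norm_sq_horizontal_vertical: "(norm x)\<^sup>2 = (norm (horizontal x))\<^sup>2 + (x$3)\<^sup>2"
  by (simp add: norm_sq_vec3)

lemma inner_vertical_self: "x \<bullet> vertical x = (x$3)\<^sup>2"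
  by (simp add: inner_vec3 power2_eq_square)

lemma norm_sq_cross_nvec:
  "(norm (cross3 x (nvec t)))\<^sup>2 = (norm (cross3 (horizontal x) (nvec t)))\<^sup>2 + (x$3)\<^sup>2"
proof -
  have "(x$3)\<^sup>2 * (sin t)\<^sup>2 + (x$3)\<^sup>2 * (cos t)\<^sup>2 = (x$3)\<^sup>2"
    by (metis distrib_left mult.right_neutral sin_cos_squared_add)
  then show ?thesis
    unfolding norm_sq_vec3 cross3_def vector_3 horizontal_nth nvec_nth
    by (simp add: power_mult_distrib)
qed

lemma proj_orth_nvec_inner_self:
  "(x - (nvec t \<bullet> x) *\<^sub>R nvec t) \<bullet> x = (norm (cross3 x (nvec t)))\<^sup>2"
proof -
  have "(norm (cross3 x (nvec t)))\<^sup>2 = (norm x)\<^sup>2 - (x \<bullet> nvec t)\<^sup>2"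
    using norm_cross_dot[of x "nvec t"] by (simp add: norm_sq_vec3 power_mult_distrib)
  then show ?thesis
    by (simp add: inner_diff_left inner_commute[of "nvec t" x] power2_eq_square
        flip: power2_norm_eq_inner)
qed

lemma proj_orth_nvec_inner_vertical:
  "(x - (nvec t \<bullet> x) *\<^sub>R nvec t) \<bullet> vertical x = (x$3)\<^sup>2"
  by (simp add: inner_vec3 power2_eq_square)

subsection \<open>Two competitors\<close>

lemma nvec_axis: "nvec = (\<lambda>t. cos t *\<^sub>R axis 1 1 + sin t *\<^sub>R axis 2 1)"
  by (rule ext) (simp add: vec_eq_iff forall_3 axis_def)

lemma nvec_has_vector_derivative:
  "(nvec has_vector_derivative (- sin t) *\<^sub>R axis 1 1 + cos t *\<^sub>R axis 2 1) (at t within S)"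
  unfolding nvec_axis by (auto intro!: derivative_eq_intros)

lemma continuous_on_nvec: "continuous_on S nvec"
  unfolding nvec_axis by (intro continuous_intros)

lemma nvec_in_Kset: "nvec \<in> Kset"
  and Gfun_nvec: "Gfun kappa nvec = 1"
proof -
  let ?d = "\<lambda>t. (- sin t) *\<^sub>R axis 1 1 + cos t *\<^sub>R axis 2 1 :: real^3"
  have d: "weak_deriv nvec ?d"
    by (rule weak_deriv_if_has_vector_derivative[OF _ nvec_has_vector_derivative])
      (intro continuous_intros)
  have norm_nvec: "norm (nvec t) = 1" and norm_d: "norm (?d t) = 1" for t
    by (simp_all add: norm_eq_1 inner_vec3 axis_def flip: power2_eq_square)
  have H: "H1per nvec"
    unfolding H1per_def using d by (auto simp: vec_eq_iff forall_3)
  then show "nvec \<in> Kset" by (simp add: Kset_def norm_nvec)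
  have "integral {-pi..pi} (\<lambda>t. (norm (wderiv nvec t))\<^sup>2) = 2 * pi"
    using integral_wderiv_eq[OF H d, of "\<lambda>x t. (norm x)\<^sup>2"] unfolding norm_d by simp
  then show "Gfun kappa nvec = 1" by (simp add: Gfun_def)
qed

lemma integral_sin_sq: "integral {-pi..pi} (\<lambda>t. (sin t)\<^sup>2) = pi"
proof -
  have "((\<lambda>t. (sin t)\<^sup>2) has_integral ((pi/2 - sin (2*pi)/4) - (-pi/2 - sin (2*(-pi))/4))) {-pi..pi}"
  proof (rule fundamental_theorem_of_calculus)
    fix x :: real
    have "((\<lambda>t. t/2 - sin (2*t)/4) has_real_derivative (1/2 - cos (2*x) * 2 / 4)) (at x within {-pi..pi})"
      by (auto intro!: derivative_eq_intros)
    moreover have "1/2 - cos (2*x) * 2 / 4 = (sin x)\<^sup>2"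
      using cos_double_sin[of x] by (simp add: algebra_simps)
    ultimately show "((\<lambda>t. t/2 - sin (2*t)/4) has_vector_derivative (sin x)\<^sup>2) (at x within {-pi..pi})"
      by (simp add: has_real_derivative_iff_has_vector_derivative)
  qed simp
  then show ?thesis by (simp add: integral_unique)
qed

lemma const_axis_in_Kset: "(\<lambda>t. axis 1 1) \<in> Kset"
  and Gfun_const_axis: "Gfun kappa (\<lambda>t. axis 1 1) = kappa\<^sup>2 / 2"
proof -
  have d: "weak_deriv (\<lambda>t. axis 1 1 :: real^3) (\<lambda>t. 0)"
    by (rule weak_deriv_if_has_vector_derivative) auto
  then have H: "H1per (\<lambda>t. axis 1 1 :: real^3)" by (auto simp: H1per_def)
  then show "(\<lambda>t. axis 1 1) \<in> Kset" by (simp add: Kset_def)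
  have "integral {-pi..pi} (\<lambda>t. (norm (wderiv (\<lambda>t. axis 1 1 :: real^3) t))\<^sup>2) = 0"
    using integral_wderiv_eq[OF H d, of "\<lambda>x t. (norm x)\<^sup>2"] by simp
  moreover have "(norm (cross3 (axis 1 1) (nvec t)))\<^sup>2 = (sin t)\<^sup>2" for t
    by (simp add: norm_sq_vec3 cross3_def axis_def)
  ultimately show "Gfun kappa (\<lambda>t. axis 1 1) = kappa\<^sup>2 / 2"
    by (simp add: Gfun_def integral_sin_sq)
qed

subsection \<open>Splitting the energy\<close>

lemma wderiv_norm_sq_integrable:
  "H1per u \<Longrightarrow> bounded_linear L \<Longrightarrow> (\<lambda>t. (norm (L (wderiv u t)))\<^sup>2) integrable_on {-pi..pi}"
  by (rule weak_deriv_norm_sq_integrable[OF weak_deriv_wderiv])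

lemma wderiv_nth_sq_integrable:
  "H1per u \<Longrightarrow> (\<lambda>t. (wderiv u t $ i)\<^sup>2) integrable_on {-pi..pi}"
  using wderiv_norm_sq_integrable[OF _ bounded_linear_vec_nth, of u i] by simp

lemma cross_nvec_norm_sq_integrable:
  "continuous_on {-pi..pi} f \<Longrightarrow> (\<lambda>t. (norm (cross3 (f t) (nvec t)))\<^sup>2) integrable_on {-pi..pi}"
  by (intro integrable_continuous_interval continuous_intros continuous_on_cross continuous_on_nvec)

lemma nth_sq_integrable:
  fixes f :: "real \<Rightarrow> real^'n"
  shows "continuous_on {-pi..pi} f \<Longrightarrow> (\<lambda>t. (f t $ i)\<^sup>2) integrable_on {-pi..pi}"
  by (intro integrable_continuous_interval continuous_intros)

lemma Gfun_nonneg: "H1per u \<Longrightarrow> 0 \<le> Gfun kappa u"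
  unfolding Gfun_def
  using wderiv_norm_sq_integrable[OF _ bounded_linear_ident, of u]
    cross_nvec_norm_sq_integrable[OF H1per_continuous_on, of u]
  by (intro add_nonneg_nonneg mult_nonneg_nonneg integral_nonneg) auto

lemma Gfun_scaleR:
  assumes u: "H1per u"
  shows "Gfun kappa (\<lambda>t. s *\<^sub>R u t) = s\<^sup>2 * Gfun kappa u"
proof -
  have d: "weak_deriv (\<lambda>t. s *\<^sub>R u t) (\<lambda>t. s *\<^sub>R wderiv u t)"
    by (rule weak_deriv_bounded_linear[OF weak_deriv_wderiv[OF u] bounded_linear_scaleR_right])
  have H: "H1per (\<lambda>t. s *\<^sub>R u t)"
    by (rule H1per_bounded_linear[OF u bounded_linear_scaleR_right])
  have "integral {-pi..pi} (\<lambda>t. (norm (wderiv (\<lambda>t. s *\<^sub>R u t) t))\<^sup>2)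
      = s\<^sup>2 * integral {-pi..pi} (\<lambda>t. (norm (wderiv u t))\<^sup>2)"
    using integral_wderiv_eq[OF H d, of "\<lambda>x t. (norm x)\<^sup>2"] by (simp add: power_mult_distrib)
  moreover have "integral {-pi..pi} (\<lambda>t. (norm (cross3 (s *\<^sub>R u t) (nvec t)))\<^sup>2)
      = s\<^sup>2 * integral {-pi..pi} (\<lambda>t. (norm (cross3 (u t) (nvec t)))\<^sup>2)"
    by (simp add: cross_mult_left power_mult_distrib)
  ultimately show ?thesis by (simp add: Gfun_def algebra_simps)
qed

lemma scaleR_inverse_sqrt_in_Kset:
  assumes h: "H1per h" and mean: "1 / (2 * pi) * integral {-pi..pi} (\<lambda>t. (norm (h t))\<^sup>2) = a"
    and "0 < a"
  shows "(\<lambda>t. (1 / sqrt a) *\<^sub>R h t) \<in> Kset"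
proof -
  have "1 / (2 * pi) * integral {-pi..pi} (\<lambda>t. (norm ((1 / sqrt a) *\<^sub>R h t))\<^sup>2)
      = 1 / a * (1 / (2 * pi) * integral {-pi..pi} (\<lambda>t. (norm (h t))\<^sup>2))"
    using \<open>0 < a\<close> by (simp add: power_mult_distrib power_divide)
  also have "\<dots> = 1" using mean \<open>0 < a\<close> by simp
  finally show ?thesis
    using H1per_bounded_linear[OF h bounded_linear_scaleR_right] unfolding Kset_def by blast
qed

lemma integral_norm_sq_horizontal_vertical:
  assumes "continuous_on {-pi..pi} f"
  shows "integral {-pi..pi} (\<lambda>t. (norm (f t))\<^sup>2)
    = integral {-pi..pi} (\<lambda>t. (norm (horizontal (f t)))\<^sup>2) + integral {-pi..pi} (\<lambda>t. (f t $ 3)\<^sup>2)"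
proof -
  have "continuous_on {-pi..pi} (\<lambda>t. horizontal (f t))"
    by (rule continuous_on_compose2[OF linear_continuous_on[OF bounded_linear_horizontal] assms]) auto
  then have "(\<lambda>t. (norm (horizontal (f t)))\<^sup>2) integrable_on {-pi..pi}"
    by (intro integrable_continuous_interval continuous_intros)
  from integral_add[OF this nth_sq_integrable[OF assms, of 3]] show ?thesis
    by (simp flip: norm_sq_horizontal_vertical)
qed

lemma Kset_mean_horizontal:
  assumes "u \<in> Kset"
  shows "1 / (2 * pi) * integral {-pi..pi} (\<lambda>t. (norm (horizontal (u t)))\<^sup>2)
    = 1 - 1 / (2 * pi) * integral {-pi..pi} (\<lambda>t. (u t $ 3)\<^sup>2)"
proof -
  have "integral {-pi..pi} (\<lambda>t. (norm (u t))\<^sup>2) = 2 * pi"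
    using assms unfolding Kset_def by auto
  then show ?thesis
    using integral_norm_sq_horizontal_vertical[OF H1per_continuous_on] assms
    by (simp add: Kset_def field_simps)
qed

lemma Gfun_horizontal_vertical:
  assumes u: "H1per u"
  shows "Gfun kappa u = Gfun kappa (\<lambda>t. horizontal (u t))
    + 1 / (2 * pi) * integral {-pi..pi} (\<lambda>t. (wderiv u t $ 3)\<^sup>2)
    + kappa\<^sup>2 / (2 * pi) * integral {-pi..pi} (\<lambda>t. (u t $ 3)\<^sup>2)"
proof -
  have c: "continuous_on {-pi..pi} u" by (rule H1per_continuous_on[OF u])
  have ch: "continuous_on {-pi..pi} (\<lambda>t. horizontal (u t))"
    by (rule continuous_on_compose2[OF linear_continuous_on[OF bounded_linear_horizontal] c]) auto
  have H: "H1per (\<lambda>t. horizontal (u t))"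
    by (rule H1per_bounded_linear[OF u bounded_linear_horizontal])
  have d: "weak_deriv (\<lambda>t. horizontal (u t)) (\<lambda>t. horizontal (wderiv u t))"
    by (rule weak_deriv_bounded_linear[OF weak_deriv_wderiv[OF u] bounded_linear_horizontal])
  have "integral {-pi..pi} (\<lambda>t. (norm (wderiv u t))\<^sup>2)
      = integral {-pi..pi} (\<lambda>t. (norm (horizontal (wderiv u t)))\<^sup>2)
        + integral {-pi..pi} (\<lambda>t. (wderiv u t $ 3)\<^sup>2)"
    using integral_add[OF wderiv_norm_sq_integrable[OF u bounded_linear_horizontal]
        wderiv_nth_sq_integrable[OF u, of 3]]
    by (simp flip: norm_sq_horizontal_vertical)
  moreover have "integral {-pi..pi} (\<lambda>t. (norm (horizontal (wderiv u t)))\<^sup>2)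
      = integral {-pi..pi} (\<lambda>t. (norm (wderiv (\<lambda>t. horizontal (u t)) t))\<^sup>2)"
    using integral_wderiv_eq[OF H d, of "\<lambda>x t. (norm x)\<^sup>2"] by simp
  moreover have "integral {-pi..pi} (\<lambda>t. (norm (cross3 (u t) (nvec t)))\<^sup>2)
      = integral {-pi..pi} (\<lambda>t. (norm (cross3 (horizontal (u t)) (nvec t)))\<^sup>2)
        + integral {-pi..pi} (\<lambda>t. (u t $ 3)\<^sup>2)"
    using integral_add[OF cross_nvec_norm_sq_integrable[OF ch] nth_sq_integrable[OF c, of 3]]
    by (simp flip: norm_sq_cross_nvec)
  ultimately show ?thesis by (simp add: Gfun_def algebra_simps add_divide_distrib)
qed

lemma in_plane_if_integral_nth3_sq_eq_0:
  assumes c: "continuous_on {-pi..pi} u" and z: "integral {-pi..pi} (\<lambda>t. (u t $ 3)\<^sup>2) = 0"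
  shows "in_plane u"
proof -
  have "continuous_on {-pi..pi} (\<lambda>t. (u t $ 3)\<^sup>2)" by (intro continuous_intros c)
  then have "\<forall>t\<in>{-pi..pi}. (u t $ 3)\<^sup>2 = 0"
    using z integral_eq_0_iff[of "-pi" pi "\<lambda>t. (u t $ 3)\<^sup>2"] by simp
  then show ?thesis unfolding in_plane_def by (simp add: inner_vec3)
qed

lemma cross_nvec_eq_0_imp_eq_0: "cross3 c (nvec 0) = 0 \<Longrightarrow> cross3 c (nvec (pi/2)) = 0 \<Longrightarrow> c = 0"
  by (simp add: cross3_def vec_eq_iff forall_3 nvec_def)

lemma Gfun_pos:
  assumes kappa: "kappa\<^sup>2 > 0" and u: "u \<in> Kset"
  shows "0 < Gfun kappa u"
proof (rule ccontr)
  assume "\<not> 0 < Gfun kappa u"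
  have H: "H1per u" and norm_u: "integral {-pi..pi} (\<lambda>t. (norm (u t))\<^sup>2) = 2 * pi"
    using u by (simp_all add: Kset_def)
  have c: "continuous_on {-pi..pi} u" by (rule H1per_continuous_on[OF H])
  define D where "D = integral {-pi..pi} (\<lambda>t. (norm (wderiv u t))\<^sup>2)"
  define C where "C = integral {-pi..pi} (\<lambda>t. (norm (cross3 (u t) (nvec t)))\<^sup>2)"
  have "0 \<le> D" "0 \<le> C" unfolding D_def C_def
    using wderiv_norm_sq_integrable[OF H bounded_linear_ident] cross_nvec_norm_sq_integrable[OF c]
    by (auto intro: integral_nonneg)
  moreover have "D + kappa\<^sup>2 * C \<le> 0"
    using \<open>\<not> 0 < Gfun kappa u\<close> by (simp add: Gfun_def D_def C_def field_simps)
  ultimately have D0: "D = 0" and C0: "C = 0" using kappa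
    by (smt (verit) mult_nonneg_nonneg zero_less_mult_iff)+
  have const: "u t = u (-pi)" if "t \<in> {-pi..pi}" for t
    using weak_deriv_norm_sq_eq_0_imp_constant[OF weak_deriv_wderiv[OF H] _ that] D0
    by (simp add: D_def)
  have "continuous_on {-pi..pi} (\<lambda>t. (norm (cross3 (u t) (nvec t)))\<^sup>2)"
    by (intro continuous_intros continuous_on_cross c continuous_on_nvec)
  then have "\<forall>t\<in>{-pi..pi}. cross3 (u t) (nvec t) = 0"
    using C0 integral_eq_0_iff[of "-pi" pi "\<lambda>t. (norm (cross3 (u t) (nvec t)))\<^sup>2"]
    by (simp add: C_def)
  moreover have "0 \<in> {-pi..pi}" "pi/2 \<in> {-pi..pi}" by auto
  ultimately have "u (-pi) = 0"
    using const[of 0] const[of "pi/2"] by (metis cross_nvec_eq_0_imp_eq_0)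
  then have "integral {-pi..pi} (\<lambda>t. (norm (u t))\<^sup>2) = integral {-pi..pi} (\<lambda>_. 0)"
    by (intro integral_cong) (metis const norm_zero power_zero_numeral)
  with norm_u show False by simp
qed

lemma integral_add_cmult:
  fixes f g :: "real \<Rightarrow> real"
  assumes "f integrable_on S" "g integrable_on S"
  shows "integral S (\<lambda>t. f t + c * g t) = integral S f + c * integral S g"
  using integral_add[OF assms(1) integrable_on_cmult_left[OF assms(2), of c]] by simp

text \<open>\<open>pi\<close> times the derivative of \<open>Gfun kappa\<close> at \<open>u\<close> in the direction \<open>phi\<close>.\<close>

definition first_variation :: "real \<Rightarrow> (real \<Rightarrow> real^3) \<Rightarrow> (real \<Rightarrow> real^3) \<Rightarrow> real" where
  "first_variation kappa u phi = integral {-pi..pi} (\<lambda>t. wderiv u t \<bullet> wderiv phi t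
     + kappa\<^sup>2 * ((u t - (nvec t \<bullet> u t) *\<^sub>R nvec t) \<bullet> phi t))"

lemma critical_point_iff:
  "critical_point kappa u \<longleftrightarrow> u \<in> Kset \<and> (\<exists>lam. \<forall>phi. H1per phi \<longrightarrow>
     first_variation kappa u phi = lam * integral {-pi..pi} (\<lambda>t. u t \<bullet> phi t))"
  unfolding critical_point_def first_variation_def ..

lemma first_variation_self:
  assumes u: "H1per u"
  shows "first_variation kappa u u = 2 * pi * Gfun kappa u"
proof -
  have "first_variation kappa u u = integral {-pi..pi} (\<lambda>t. (norm (wderiv u t))\<^sup>2
      + kappa\<^sup>2 * (norm (cross3 (u t) (nvec t)))\<^sup>2)"
    unfolding first_variation_def
    by (intro integral_cong) (simp add: proj_orth_nvec_inner_self power2_norm_eq_inner)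
  also have "\<dots> = integral {-pi..pi} (\<lambda>t. (norm (wderiv u t))\<^sup>2)
      + kappa\<^sup>2 * integral {-pi..pi} (\<lambda>t. (norm (cross3 (u t) (nvec t)))\<^sup>2)"
    by (rule integral_add_cmult[OF wderiv_norm_sq_integrable[OF u bounded_linear_ident]
          cross_nvec_norm_sq_integrable[OF H1per_continuous_on[OF u]]])
  finally show ?thesis by (simp add: Gfun_def field_simps)
qed

lemma first_variation_vertical:
  assumes u: "H1per u"
  shows "first_variation kappa u (\<lambda>t. vertical (u t))
    = integral {-pi..pi} (\<lambda>t. (wderiv u t $ 3)\<^sup>2) + kappa\<^sup>2 * integral {-pi..pi} (\<lambda>t. (u t $ 3)\<^sup>2)"
proof -
  have H: "H1per (\<lambda>t. vertical (u t))"
    by (rule H1per_bounded_linear[OF u bounded_linear_vertical])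
  have d: "weak_deriv (\<lambda>t. vertical (u t)) (\<lambda>t. vertical (wderiv u t))"
    by (rule weak_deriv_bounded_linear[OF weak_deriv_wderiv[OF u] bounded_linear_vertical])
  have "first_variation kappa u (\<lambda>t. vertical (u t))
      = integral {-pi..pi} (\<lambda>t. (wderiv u t $ 3)\<^sup>2 + kappa\<^sup>2 * (u t $ 3)\<^sup>2)"
    unfolding first_variation_def
    using integral_wderiv_eq[OF H d, of "\<lambda>x t. wderiv u t \<bullet> x
        + kappa\<^sup>2 * ((u t - (nvec t \<bullet> u t) *\<^sub>R nvec t) \<bullet> vertical (u t))"]
    by (simp add: inner_vertical_self proj_orth_nvec_inner_vertical)
  also have "\<dots> = integral {-pi..pi} (\<lambda>t. (wderiv u t $ 3)\<^sup>2)
      + kappa\<^sup>2 * integral {-pi..pi} (\<lambda>t. (u t $ 3)\<^sup>2)"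
    by (rule integral_add_cmult[OF wderiv_nth_sq_integrable[OF u]
          nth_sq_integrable[OF H1per_continuous_on[OF u]]])
  finally show ?thesis .
qed

lemma critical_point_in_plane:
  assumes crit: "critical_point kappa u" and less: "Gfun kappa u < kappa\<^sup>2"
  shows "in_plane u"
proof -
  obtain lam where u: "u \<in> Kset" and EL: "\<And>phi. H1per phi \<Longrightarrow>
      first_variation kappa u phi = lam * integral {-pi..pi} (\<lambda>t. u t \<bullet> phi t)"
    using crit unfolding critical_point_iff by blast
  have H: "H1per u" and norm_u: "integral {-pi..pi} (\<lambda>t. u t \<bullet> u t) = 2 * pi"
    using u by (simp_all add: Kset_def power2_norm_eq_inner)
  have c: "continuous_on {-pi..pi} u" by (rule H1per_continuous_on[OF H])
  have "2 * pi * Gfun kappa u = lam * (2 * pi)"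
    using EL[OF H] by (simp add: first_variation_self[OF H] norm_u)
  then have lam: "lam = Gfun kappa u" by simp
  define I where "I = integral {-pi..pi} (\<lambda>t. (u t $ 3)\<^sup>2)"
  have "0 \<le> I" unfolding I_def by (intro integral_nonneg nth_sq_integrable c) auto
  have "0 \<le> integral {-pi..pi} (\<lambda>t. (wderiv u t $ 3)\<^sup>2)"
    by (intro integral_nonneg wderiv_nth_sq_integrable H) auto
  moreover have "integral {-pi..pi} (\<lambda>t. (wderiv u t $ 3)\<^sup>2) + kappa\<^sup>2 * I = lam * I"
    using EL[OF H1per_bounded_linear[OF H bounded_linear_vertical]]
    by (simp add: first_variation_vertical[OF H] inner_vertical_self I_def)
  ultimately have "(kappa\<^sup>2 - Gfun kappa u) * I \<le> 0" by (simp add: lam algebra_simps)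
  with less \<open>0 \<le> I\<close> have "I = 0" by (simp add: mult_le_0_iff)
  then show ?thesis using in_plane_if_integral_nth3_sq_eq_0[OF c] by (simp add: I_def)
qed

lemma minimizer_Gfun_le:
  assumes "minimizer kappa u"
  shows "Gfun kappa u \<le> min (kappa\<^sup>2 / 2) 1"
proof -
  have "Gfun kappa u \<le> Gfun kappa nvec" "Gfun kappa u \<le> Gfun kappa (\<lambda>t. axis 1 1)"
    using assms nvec_in_Kset const_axis_in_Kset unfolding minimizer_def by auto
  then show ?thesis by (simp add: Gfun_nvec Gfun_const_axis)
qed

lemma le_sum_if_le_rescaled:
  fixes H V m k :: real
  assumes H: "0 \<le> H" and V: "k * m \<le> V" and m: "0 < m" "m < 1"
    and le: "H + V \<le> H / (1 - m)"
  shows "k \<le> H + V"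
proof -
  have "(H + V) * (1 - m) \<le> H" using le m by (simp add: le_divide_eq)
  then have "V * (1 - m) \<le> H * m" by (simp add: algebra_simps)
  moreover have "k * m * (1 - m) \<le> V * (1 - m)" using V m by (intro mult_right_mono) auto
  ultimately have "m * (k * (1 - m)) \<le> m * H" by (simp add: algebra_simps)
  then have "k * (1 - m) \<le> H" using m by simp
  then show ?thesis using V by (simp add: algebra_simps)
qed

lemma minimizer_in_plane:
  assumes kappa: "kappa\<^sup>2 > 0" and min: "minimizer kappa u"
  shows "in_plane u"
proof -
  have u: "u \<in> Kset" and le_all: "\<And>w. w \<in> Kset \<Longrightarrow> Gfun kappa u \<le> Gfun kappa w"
    using min unfolding minimizer_def by auto
  have H: "H1per u" using u by (simp add: Kset_def)
  have c: "continuous_on {-pi..pi} u" by (rule H1per_continuous_on[OF H])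
  define h where "h = (\<lambda>t. horizontal (u t))"
  define m where "m = 1 / (2 * pi) * integral {-pi..pi} (\<lambda>t. (u t $ 3)\<^sup>2)"
  define V where "V = 1 / (2 * pi) * integral {-pi..pi} (\<lambda>t. (wderiv u t $ 3)\<^sup>2) + kappa\<^sup>2 * m"
  have Hh: "H1per h" unfolding h_def by (rule H1per_bounded_linear[OF H bounded_linear_horizontal])
  have G: "Gfun kappa u = Gfun kappa h + V"
    using Gfun_horizontal_vertical[OF H] by (simp add: h_def V_def m_def)
  have mean_h: "1 / (2 * pi) * integral {-pi..pi} (\<lambda>t. (norm (h t))\<^sup>2) = 1 - m"
    using Kset_mean_horizontal[OF u] by (simp add: h_def m_def)
  have "0 \<le> integral {-pi..pi} (\<lambda>t. (u t $ 3)\<^sup>2)"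
    by (intro integral_nonneg nth_sq_integrable c) auto
  then have "0 \<le> m" by (simp add: m_def)
  have "0 \<le> integral {-pi..pi} (\<lambda>t. (wderiv u t $ 3)\<^sup>2)"
    by (intro integral_nonneg wderiv_nth_sq_integrable H) auto
  then have "kappa\<^sup>2 * m \<le> V" by (simp add: V_def)
  have less: "Gfun kappa u < kappa\<^sup>2" using minimizer_Gfun_le[OF min] kappa by linarith
  have "m = 0"
  proof (rule ccontr)
    assume "m \<noteq> 0"
    with \<open>0 \<le> m\<close> have "0 < m" by simp
    have "m < 1"
    proof (rule ccontr)
      assume "\<not> m < 1"
      then have "kappa\<^sup>2 \<le> kappa\<^sup>2 * m" using kappa by simp
      with \<open>kappa\<^sup>2 * m \<le> V\<close> G Gfun_nonneg[OF Hh, of kappa] less show False by linarith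
    qed
    define w where "w = (\<lambda>t. (1 / sqrt (1 - m)) *\<^sub>R h t)"
    have "w \<in> Kset"
      unfolding w_def using \<open>m < 1\<close> by (intro scaleR_inverse_sqrt_in_Kset[OF Hh mean_h]) simp
    moreover have "Gfun kappa w = Gfun kappa h / (1 - m)"
      using Gfun_scaleR[OF Hh] \<open>m < 1\<close> by (simp add: w_def power_divide)
    ultimately have "Gfun kappa h + V \<le> Gfun kappa h / (1 - m)" using le_all G by fastforce
    from le_sum_if_le_rescaled[OF Gfun_nonneg[OF Hh] \<open>kappa\<^sup>2 * m \<le> V\<close> \<open>0 < m\<close> \<open>m < 1\<close> this]
    show False using G less by simp
  qed
  then show ?thesis using in_plane_if_integral_nth3_sq_eq_0[OF c] by (simp add: m_def)
qed

theorem mainTheorem6: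
  fixes kappa :: real
  assumes "kappa\<^sup>2 > 0"
  shows "(\<forall>u. critical_point kappa u \<and> Gfun kappa u < kappa\<^sup>2 \<longrightarrow> in_plane u)
       \<and> (\<forall>u. minimizer kappa u \<longrightarrow>
            0 < Gfun kappa u \<and> Gfun kappa u \<le> min (kappa\<^sup>2 / 2) 1 \<and> in_plane u)"
  using critical_point_in_plane minimizer_Gfun_le minimizer_in_plane[OF assms]
    Gfun_pos[OF assms] minimizer_def by blast

end
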